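(* If a topological space $X$ is $\alpha_1$, then for each $x\in X$, player ONE does not have a winning strategy in the game $\alpha^{\mathrm{game}}(X,x)$.
   Context: Convention: a "sequence" is a countably infinite set; a countably infinite set $A$ converges to $x$ if $x\notin A$ and every neighborhood of $x$ contains all but finitely many elements of $A$. $X$ is $\alpha_1$ if for each $x\in X$ and all pairwise disjoint sequences $S_1,S_2,\dots\subseteq X$ each converging to $x$, there is a sequence $S\subseteq\bigcup_nS_n$ converging to $x$ such that $S_n\setminus S$ is finite for all $n$. The game $\alpha^{\mathrm{game}}(X,x)$: in the $n$-th inning ONE chooses a sequence $S_n\subseteq X$ converging to $x$, TWO responds with an infinite $T_n\subseteq S_n$; TWO wins if $\bigcup_nT_n$ converges to $x$, otherwise ONE wins. *)

theory Defs
  imports "HOL-Analysis.Analysis"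
begin

definition converges_to :: "'a topology \<Rightarrow> 'a set \<Rightarrow> 'a \<Rightarrow> bool" where
  "converges_to X A x \<longleftrightarrow>
     A \<subseteq> topspace X \<and> countable A \<and> infinite A \<and> x \<notin> A \<and>
     (\<forall>U. openin X U \<and> x \<in> U \<longrightarrow> finite (A - U))"

definition alpha1 :: "'a topology \<Rightarrow> bool" where
  "alpha1 X \<longleftrightarrow>
     (\<forall>x \<in> topspace X. \<forall>S :: nat \<Rightarrow> 'a set.
        (\<forall>n. converges_to X (S n) x) \<and> (\<forall>m n. m \<noteq> n \<longrightarrow> S m \<inter> S n = {}) \<longrightarrow>
        (\<exists>T. T \<subseteq> (\<Union>n. S n) \<and> converges_to X T x \<and> (\<forall>n. finite (S n - T))))"

text \<open>A strategy for ONE in the game alpha-game(X,x) maps the finite history of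
  TWO's previous moves [T_0, ..., T_{n-1}] to ONE's move S_n in inning n.
  (ONE's own earlier moves are determined by the strategy and this history.)\<close>
type_synonym 'a one_strategy = "'a set list \<Rightarrow> 'a set"

definition legal_history :: "'a one_strategy \<Rightarrow> 'a set list \<Rightarrow> bool" where
  "legal_history \<sigma> h \<longleftrightarrow>
     (\<forall>k < length h. infinite (h ! k) \<and> h ! k \<subseteq> \<sigma> (take k h))"

definition legal_play :: "'a one_strategy \<Rightarrow> (nat \<Rightarrow> 'a set) \<Rightarrow> bool" where
  "legal_play \<sigma> T \<longleftrightarrow> (\<forall>n. infinite (T n) \<and> T n \<subseteq> \<sigma> (map T [0..<n]))"

definition one_winning_strategy :: "'a topology \<Rightarrow> 'a \<Rightarrow> 'a one_strategy \<Rightarrow> bool" where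
  "one_winning_strategy X x \<sigma> \<longleftrightarrow>
     (\<forall>h. legal_history \<sigma> h \<longrightarrow> converges_to X (\<sigma> h) x) \<and>
     (\<forall>T. legal_play \<sigma> T \<longrightarrow> \<not> converges_to X (\<Union>n. T n) x)"

end

theory Submission
  imports Defs
begin

text \<open>Suppose \<sigma> were a winning strategy for ONE. Consider all partial plays in which TWO
  answers each move of ONE by deleting finitely many of its points. There are only countably
  many of them, so ONE's moves along them form a countable family of sequences converging
  to x. Being \<open>\<alpha>\<^sub>1\<close> (which extends from disjoint to arbitrary countable families), X provides a
  single sequence T converging to x that almost contains each of these moves. If TWO now always
  answers ONE's move A by \<open>A \<inter> T\<close>, the play stays inside that countable tree, every answer is
  infinite, and the union of TWO's moves is an infinite subset of T, hence converges to x.\<close>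

lemma converges_to_subset:
  assumes "converges_to X A x" "B \<subseteq> A" "infinite B"
  shows "converges_to X B x"
  using assms unfolding converges_to_def
  by (meson countable_subset finite_subset Diff_mono subset_iff order_refl)

lemma converges_to_Un:
  assumes "converges_to X A x" "converges_to X B x"
  shows "converges_to X (A \<union> B) x"
  using assms unfolding converges_to_def by (auto simp: Un_Diff)

lemma converges_to_UN_finite:
  assumes "finite I" "I \<noteq> {}" "\<And>i. i \<in> I \<Longrightarrow> converges_to X (S i) x"
  shows "converges_to X (\<Union>i\<in>I. S i) x"
  using assms
  by (induction I rule: finite_ne_induct) (auto intro: converges_to_Un)

lemma alpha1E:
  fixes S :: "nat \<Rightarrow> 'a set"
  assumes "alpha1 X" "x \<in> topspace X" "\<And>n. converges_to X (S n) x"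
    and "\<And>m n. m \<noteq> n \<Longrightarrow> S m \<inter> S n = {}"
  obtains T where "T \<subseteq> (\<Union>n. S n)" "converges_to X T x" "\<And>n. finite (S n - T)"
proof -
  have "(\<forall>n. converges_to X (S n) x) \<and> (\<forall>m n. m \<noteq> n \<longrightarrow> S m \<inter> S n = {})"
    using assms(3,4) by blast
  with assms(1,2) have "\<exists>T. T \<subseteq> (\<Union>n. S n) \<and> converges_to X T x \<and> (\<forall>n. finite (S n - T))"
    unfolding alpha1_def by simp
  with that show thesis
    by blast
qed

lemma alpha1_disjoint_family_on:
  assumes "alpha1 X" "x \<in> topspace X" "countable I" "infinite I"
    and disjoint: "disjoint_family_on D I" and conv: "\<And>i. i \<in> I \<Longrightarrow> converges_to X (D i) x"
  obtains T where "T \<subseteq> (\<Union>i\<in>I. D i)" "converges_to X T x" "\<And>i. i \<in> I \<Longrightarrow> finite (D i - T)"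
proof -
  let ?e = "from_nat_into I"
  have "bij_betw ?e UNIV I"
    using assms(3,4) by (rule bij_betw_from_nat_into)
  then have range_e: "range ?e = I" and e_inj: "inj ?e"
    by (simp_all add: bij_betw_def)
  have disj: "D (?e m) \<inter> D (?e n) = {}" if "m \<noteq> n" for m n
  proof -
    have "?e m \<noteq> ?e n" "?e m \<in> I" "?e n \<in> I"
      using injD[OF e_inj] that range_e by auto
    then show ?thesis
      using disjoint unfolding disjoint_family_on_def by blast
  qed
  have conv_e: "converges_to X (D (?e n)) x" for n
    using range_e by (intro conv) auto
  obtain T where T: "T \<subseteq> (\<Union>n. D (?e n))" "converges_to X T x" "\<And>n. finite (D (?e n) - T)"
    using alpha1E[OF assms(1,2), of "\<lambda>n. D (?e n)"] conv_e disj by blast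
  show thesis
  proof (rule that)
    show "T \<subseteq> (\<Union>i\<in>I. D i)"
      using T(1) range_e by auto
    show "converges_to X T x"
      by (rule T(2))
    fix i assume "i \<in> I"
    then obtain n where "i = ?e n"
      using range_e by auto
    then show "finite (D i - T)"
      using T(3) by simp
  qed
qed

text \<open>Disjointify the sequences: the pieces that stay infinite still converge to x, and each
  sequence is covered by finitely many pieces.\<close>
lemma alpha1_sequence:
  fixes S :: "nat \<Rightarrow> 'a set"
  assumes "alpha1 X" "x \<in> topspace X" and conv: "\<And>n. converges_to X (S n) x"
  obtains T where "converges_to X T x" "\<And>n. finite (S n - T)"
proof -
  let ?D = "disjointed S"
  define N where "N = {n. infinite (?D n)}"
  obtain T where T: "converges_to X T x" and D_almost_in_T: "\<And>n. finite (?D n - T)"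
  proof (cases "finite N")
    case True
    then obtain M where M: "\<And>n. n \<in> N \<Longrightarrow> n \<le> M"
      using finite_nat_iff_bounded_le by auto
    have "converges_to X (\<Union>m\<in>{..M}. S m) x"
      by (rule converges_to_UN_finite) (use conv in auto)
    moreover have "finite (?D n - (\<Union>m\<in>{..M}. S m))" for n
    proof (cases "n \<le> M")
      case True
      then have "?D n \<subseteq> (\<Union>m\<in>{..M}. S m)"
        using disjointed_subset[of S n] by auto
      then show ?thesis
        by (metis Diff_eq_empty_iff finite.emptyI)
    next
      case False
      then show ?thesis
        using M[of n] unfolding N_def by auto
    qed
    ultimately show thesis
      using that by blast
  next
    case False
    have "disjoint_family_on ?D N"
      using disjoint_family_on_mono[OF subset_UNIV disjoint_family_disjointed] .
    moreover have "converges_to X (?D n) x" if "n \<in> N" for n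
      using that converges_to_subset[OF conv[of n] disjointed_subset[of S n]] unfolding N_def by blast
    ultimately obtain T where "T \<subseteq> (\<Union>n\<in>N. ?D n)" "converges_to X T x"
        "\<And>n. n \<in> N \<Longrightarrow> finite (?D n - T)"
      using alpha1_disjoint_family_on[OF assms(1,2) countableI_type False] by blast
    then show thesis
      using that unfolding N_def by blast
  qed
  have "finite (S n - T)" for n
  proof -
    have "S n \<subseteq> (\<Union>m\<in>{0..<Suc n}. ?D m)"
      unfolding finite_UN_disjointed_eq by auto
    then have "S n - T \<subseteq> (\<Union>m\<in>{0..<Suc n}. (?D m - T))"
      by blast
    moreover have "finite (\<Union>m\<in>{0..<Suc n}. (?D m - T))"
      by (rule finite_UN_I) (simp_all add: D_almost_in_T)
    ultimately show ?thesis
      by (rule finite_subset)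
  qed
  with T that show thesis
    by blast
qed

lemma alpha1_countable_family:
  assumes "alpha1 X" "x \<in> topspace X" "countable \<S>" "\<S> \<noteq> {}"
    and "\<And>A. A \<in> \<S> \<Longrightarrow> converges_to X A x"
  obtains T where "converges_to X T x" "\<And>A. A \<in> \<S> \<Longrightarrow> finite (A - T)"
proof -
  obtain T where "converges_to X T x" "\<And>n. finite (from_nat_into \<S> n - T)"
    using alpha1_sequence[OF assms(1,2), of "from_nat_into \<S>"] assms(5) from_nat_into[OF assms(4)]
    by blast
  moreover have "\<S> = range (from_nat_into \<S>)"
    using assms(3,4) by simp
  ultimately show thesis
    using that by (metis rangeE)
qed

primrec cofinite_histories :: "'a one_strategy \<Rightarrow> nat \<Rightarrow> 'a set list set" where
  "cofinite_histories \<sigma> 0 = {[]}"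
| "cofinite_histories \<sigma> (Suc n) =
     (\<Union>h\<in>cofinite_histories \<sigma> n. (\<lambda>F. h @ [\<sigma> h - F]) ` {F. finite F \<and> F \<subseteq> \<sigma> h})"

lemma legal_history_snoc:
  assumes "legal_history \<sigma> h" "infinite A" "A \<subseteq> \<sigma> h"
  shows "legal_history \<sigma> (h @ [A])"
  using assms unfolding legal_history_def by (auto simp: nth_append less_Suc_eq)

lemma legal_history_cofinite_histories:
  assumes infinite_moves: "\<And>h. legal_history \<sigma> h \<Longrightarrow> infinite (\<sigma> h)"
  shows "h \<in> cofinite_histories \<sigma> n \<Longrightarrow> legal_history \<sigma> h"
proof (induction n arbitrary: h)
  case 0
  then show ?case by (simp add: legal_history_def)
next
  case (Suc n)
  then obtain g F where "g \<in> cofinite_histories \<sigma> n" "finite F" and h: "h = g @ [\<sigma> g - F]"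
    by auto
  with Suc.IH infinite_moves show ?case
    unfolding h by (intro legal_history_snoc) auto
qed

lemma countable_cofinite_histories:
  assumes "\<And>h. legal_history \<sigma> h \<Longrightarrow> infinite (\<sigma> h)"
    and "\<And>h. legal_history \<sigma> h \<Longrightarrow> countable (\<sigma> h)"
  shows "countable (cofinite_histories \<sigma> n)"
proof (induction n)
  case 0
  then show ?case by simp
next
  case (Suc n)
  have "countable (\<sigma> h)" if "h \<in> cofinite_histories \<sigma> n" for h
    using assms legal_history_cofinite_histories that by blast
  with Suc.IH show ?case
    by (auto intro!: countable_Collect_finite_subset)
qed

primrec restricted_history :: "'a one_strategy \<Rightarrow> 'a set \<Rightarrow> nat \<Rightarrow> 'a set list" where
  "restricted_history \<sigma> T 0 = []"
| "restricted_history \<sigma> T (Suc n) =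
     restricted_history \<sigma> T n @ [\<sigma> (restricted_history \<sigma> T n) \<inter> T]"

lemma restricted_history_in_cofinite_histories:
  assumes "\<And>h n. h \<in> cofinite_histories \<sigma> n \<Longrightarrow> finite (\<sigma> h - T)"
  shows "restricted_history \<sigma> T n \<in> cofinite_histories \<sigma> n"
proof (induction n)
  case 0
  then show ?case by simp
next
  case (Suc n)
  let ?g = "restricted_history \<sigma> T n"
  have "\<sigma> ?g \<inter> T = \<sigma> ?g - (\<sigma> ?g - T)"
    by blast
  with Suc assms show ?case
    by (auto intro!: bexI[of _ ?g] image_eqI[of _ _ "\<sigma> ?g - T"])
qed

lemma legal_play_restricted:
  assumes "\<And>h. legal_history \<sigma> h \<Longrightarrow> infinite (\<sigma> h)"
    and "\<And>h n. h \<in> cofinite_histories \<sigma> n \<Longrightarrow> finite (\<sigma> h - T)"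
  shows "legal_play \<sigma> (\<lambda>n. \<sigma> (restricted_history \<sigma> T n) \<inter> T)"
proof -
  have history: "map (\<lambda>k. \<sigma> (restricted_history \<sigma> T k) \<inter> T) [0..<n] = restricted_history \<sigma> T n"
    for n by (induction n) auto
  have "infinite (\<sigma> (restricted_history \<sigma> T n) \<inter> T)" for n
  proof -
    let ?h = "restricted_history \<sigma> T n"
    have "?h \<in> cofinite_histories \<sigma> n"
      using assms(2) by (rule restricted_history_in_cofinite_histories)
    then have "infinite (\<sigma> ?h)" "finite (\<sigma> ?h - T)"
      using assms legal_history_cofinite_histories by blast+
    moreover have "\<sigma> ?h \<inter> T = \<sigma> ?h - (\<sigma> ?h - T)"
      by blast
    ultimately show ?thesis
      by simp
  qed
  then show ?thesis
    unfolding legal_play_def history by blast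
qed

lemma legal_play_infinite_UN:
  assumes "legal_play \<sigma> P"
  shows "infinite (\<Union>n. P n)"
proof (rule infinite_super)
  show "P 0 \<subseteq> (\<Union>n. P n)"
    by blast
  show "infinite (P 0)"
    using assms unfolding legal_play_def by blast
qed

theorem proposition2p12:
  fixes X :: "'a topology"
  assumes "alpha1 X"
  shows "\<forall>x \<in> topspace X. \<not> (\<exists>\<sigma>. one_winning_strategy X x \<sigma>)"
proof (intro ballI notI, elim exE)
  fix x \<sigma> assume x: "x \<in> topspace X" and winning: "one_winning_strategy X x \<sigma>"
  have conv: "\<And>h. legal_history \<sigma> h \<Longrightarrow> converges_to X (\<sigma> h) x"
    using winning unfolding one_winning_strategy_def by blast
  then have infinite_moves: "\<And>h. legal_history \<sigma> h \<Longrightarrow> infinite (\<sigma> h)"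
    and countable_moves: "\<And>h. legal_history \<sigma> h \<Longrightarrow> countable (\<sigma> h)"
    unfolding converges_to_def by blast+
  let ?\<S> = "\<sigma> ` (\<Union>n. cofinite_histories \<sigma> n)"
  have "countable ?\<S>"
    using countable_cofinite_histories[of \<sigma>] infinite_moves countable_moves by blast
  moreover have "?\<S> \<noteq> {}"
    using cofinite_histories.simps(1)[of \<sigma>] by blast
  moreover have "\<And>A. A \<in> ?\<S> \<Longrightarrow> converges_to X A x"
    using conv legal_history_cofinite_histories[of \<sigma>, OF infinite_moves] by blast
  ultimately obtain T where T: "converges_to X T x" "\<And>A. A \<in> ?\<S> \<Longrightarrow> finite (A - T)"
    using alpha1_countable_family[OF assms x] by metis
  have almost_in_T: "finite (\<sigma> h - T)" if "h \<in> cofinite_histories \<sigma> n" for h n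
    using that by (intro T(2)) blast
  define P where "P n = \<sigma> (restricted_history \<sigma> T n) \<inter> T" for n
  have "legal_play \<sigma> P"
    unfolding P_def using infinite_moves almost_in_T by (rule legal_play_restricted)
  moreover have "(\<Union>n. P n) \<subseteq> T"
    unfolding P_def by auto
  ultimately have "converges_to X (\<Union>n. P n) x"
    using converges_to_subset[OF T(1)] legal_play_infinite_UN by blast
  moreover note \<open>legal_play \<sigma> P\<close>
  ultimately show False
    using winning unfolding one_winning_strategy_def by blast
qed

end
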